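(* In the i.i.d. setting, consider Algorithm $\varepsilon$-Greedy-LCBT and let $a_n=\lceil\sqrt{n\ell_n}\rceil$. Let $\mathcal{E}_1$ be the event that $$|x^\top(\hat\theta_i-\theta)|\le\xi_i(x)\quad\text{for all }x\in\mathbb{R}^d\text{ and all }i\in\{a_n+1,\dots,n\}.$$ Let $g:=\sqrt{L\|V_{a_n}^{-1}\|_2}\,\big(\sigma\sqrt{d\log(n+n^2L/(d\beta))}+\sqrt{S\beta}\big)$. Let $\alpha^*$ satisfy $\mathbb{P}_{z\sim\mathcal{D}_x}(z^\top\theta\le\alpha^* )=1-\frac1n$. Then on $\mathcal{E}_1$, for every $i>a_n$ and every realization of $(\hat\theta_i,V_i,\mathcal{I}_i)$, $$\alpha^*-2g\le\alpha_i\le\alpha^*.$$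
   Context: Setting. Fix a horizon $n$ and dimension $d$. There is an unknown parameter $\theta\in\mathbb{R}^d$ with $\|\theta\|_2^2\le S$. For each $i\in[n]$ a feature vector $x_i\in\mathbb{R}^d$ is drawn independently from a distribution $\mathcal{D}_{x,i}$. Almost surely $\|x_i\|_2^2\le L$. The reward is $X_i=x_i^\top\theta\ge 0$. The noises $\eta_1,\dots,\eta_n$ are i.i.d. $\sigma$-sub-Gaussian and independent of the features, and $y_i=X_i+\eta_i$. i.i.d. setting: $\mathcal{D}_{x,i}=\mathcal{D}_x$ for all $i$. Quantities of Algorithm $\varepsilon$-Greedy-LCBT. Each stage $i$ is independently an exploration stage with probability $\varepsilon$ (else a decision stage). $\mathcal{I}_i$ is the set of exploration stages among $1,\dots,i$, and $\beta>0$. - $V_i=\sum_{t\in\mathcal{I}_i}x_tx_t^\top+\beta I_d$ and $\hat\theta_i=V_i^{-1}\sum_{t\in\mathcal{I}_i}y_tx_t$. - $\xi_i(x)=\sqrt{x^\top V_i^{-1}x}\,\big(\sigma\sqrt{d\log(n+n|\mathcal{I}_i|L/(d\beta))}+\sqrt{S\beta}\big)$. - $\alpha_i$ satisfies $\mathbb{P}_{z\sim\mathcal{D}_x}(z^\top\hat\theta_i-\xi_i(z)\le\alpha_i\mid\hat\theta_i,V_i,\mathcal{I}_i)=1-\frac1n$. The relevant distributions are assumed continuous, so that these quantiles exist and are unique. *)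

theory Defs
  imports "HOL-Analysis.Analysis" "HOL-Probability.Probability"
begin

definition expl_set :: "nat set \<Rightarrow> nat \<Rightarrow> nat set" where
  "expl_set I i = I \<inter> {1..i}"

definition outer :: "real^'d \<Rightarrow> real^'d^'d" where
  "outer v = (\<chi> j k. v $ j * v $ k)"

definition Vmat :: "real \<Rightarrow> (nat \<Rightarrow> real^'d) \<Rightarrow> nat set \<Rightarrow> nat \<Rightarrow> real^'d^'d" where
  "Vmat \<beta> x I i = (\<Sum>t\<in>expl_set I i. outer (x t)) + \<beta> *\<^sub>R mat 1"

definition theta_hat :: "real \<Rightarrow> (nat \<Rightarrow> real^'d) \<Rightarrow> (nat \<Rightarrow> real) \<Rightarrow> nat set \<Rightarrow> nat \<Rightarrow> real^'d" where
  "theta_hat \<beta> x y I i = matrix_inv (Vmat \<beta> x I i) *v (\<Sum>t\<in>expl_set I i. y t *\<^sub>R x t)"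

definition xi :: "nat \<Rightarrow> real \<Rightarrow> real \<Rightarrow> real \<Rightarrow> real \<Rightarrow> (nat \<Rightarrow> real^'d) \<Rightarrow> nat set \<Rightarrow> nat \<Rightarrow> real^'d \<Rightarrow> real" where
  "xi n \<sigma> S L \<beta> x I i z =
     sqrt (z \<bullet> (matrix_inv (Vmat \<beta> x I i) *v z)) *
     (\<sigma> * sqrt (real CARD('d) * ln (real n + real n * real (card (expl_set I i)) * L / (real CARD('d) * \<beta>)))
      + sqrt (S * \<beta>))"

end

theory Submission
  imports Defs
begin

text \<open>
  On \<open>\<E>\<^sub>1\<close>, the statistic \<open>z \<bullet> \<theta>\<^sub>i - \<xi>\<^sub>i z\<close> whose quantile is \<open>\<alpha>\<^sub>i\<close> lies between
  \<open>z \<bullet> \<theta> - 2 \<xi>\<^sub>i z\<close> and \<open>z \<bullet> \<theta>\<close>, and a random variable that is almost surely below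
  another has the smaller (unique) quantile. It remains to bound \<open>\<xi>\<^sub>i z \<le> g\<close> on the support
  \<open>\<parallel>z\<parallel>\<^sup>2 \<le> L\<close>: for \<open>i \<ge> a\<close> the matrix \<open>V\<^sub>i\<close> is \<open>V\<^sub>a\<close> plus a positive semidefinite matrix, so
  \<open>z\<^sup>T V\<^sub>i\<^sup>-\<^sup>1 z \<le> z\<^sup>T V\<^sub>a\<^sup>-\<^sup>1 z \<le> L \<parallel>V\<^sub>a\<^sup>-\<^sup>1\<parallel>\<close>, and \<open>|\<I>\<^sub>i| \<le> n\<close> bounds the logarithmic factor.
\<close>

lemma (in finite_measure) unique_quantile_le:
  fixes f h :: "'a \<Rightarrow> real"
  assumes [measurable]: "f \<in> borel_measurable M" "h \<in> borel_measurable M"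
    and AE_le: "AE z in M. f z \<le> h z"
    and h_quantile: "measure M {z \<in> space M. h z \<le> a} = p"
    and f_quantile: "\<forall>\<alpha>. measure M {z \<in> space M. f z \<le> \<alpha>} = p \<longleftrightarrow> \<alpha> = b"
  shows "b \<le> a"
proof (rule ccontr)
  assume "\<not> b \<le> a"
  have "p \<le> measure M {z \<in> space M. f z \<le> a}"
    unfolding h_quantile[symmetric]
    by (intro finite_measure_mono_AE) (use AE_le in \<open>auto elim: AE_mp\<close>)
  moreover have "measure M {z \<in> space M. f z \<le> a} \<le> measure M {z \<in> space M. f z \<le> b}"
    using \<open>\<not> b \<le> a\<close> by (intro finite_measure_mono) auto
  moreover have "measure M {z \<in> space M. f z \<le> b} = p"
    using f_quantile by blast
  ultimately have "measure M {z \<in> space M. f z \<le> a} = p"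
    by linarith
  then have "a = b"
    using f_quantile by blast
  with \<open>\<not> b \<le> a\<close> show False
    by simp
qed

definition pos_semidef :: "real^'n^'n \<Rightarrow> bool" where
  "pos_semidef A \<longleftrightarrow> (\<forall>v. 0 \<le> v \<bullet> (A *v v))"

lemma pos_semidef_add: "pos_semidef A \<Longrightarrow> pos_semidef B \<Longrightarrow> pos_semidef (A + B)"
  by (simp add: pos_semidef_def matrix_vector_mult_add_rdistrib inner_add_right)

lemma pos_semidef_sum: "(\<And>t. t \<in> T \<Longrightarrow> pos_semidef (A t)) \<Longrightarrow> pos_semidef (\<Sum>t\<in>T. A t)"
  by (induction T rule: infinite_finite_induct) (simp_all add: pos_semidef_add, simp_all add: pos_semidef_def)

lemma outer_mult_vec: "outer v *v u = (v \<bullet> u) *\<^sub>R v"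
  by (simp add: outer_def matrix_vector_mult_def inner_vec_def vec_eq_iff sum_distrib_left ac_simps)

lemma pos_semidef_outer: "pos_semidef (outer v)"
  by (simp add: pos_semidef_def outer_mult_vec inner_commute)

lemma matrix_vector_mult_matrix_inv:
  fixes A :: "real^'n^'n"
  assumes "invertible A"
  shows "A *v (matrix_inv A *v z) = z"
proof -
  have "\<exists>A'. A ** A' = mat 1 \<and> A' ** A = mat 1"
    using assms invertible_def by blast
  then have "A ** matrix_inv A = mat 1"
    unfolding matrix_inv_def by (rule someI2_ex) blast
  then show ?thesis
    by (simp add: matrix_vector_mul_assoc)
qed

text \<open>Variational form of the inverse quadratic form, the maximum being attained at \<open>u = A\<^sup>-\<^sup>1 z\<close>.\<close>

lemma inner_matrix_inv_ge:
  fixes A :: "real^'n^'n"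
  assumes symm: "transpose A = A" and "pos_semidef A" and "invertible A"
  shows "2 * (z \<bullet> u) - u \<bullet> (A *v u) \<le> z \<bullet> (matrix_inv A *v z)"
proof -
  define v where "v = matrix_inv A *v z"
  have z: "A *v v = z"
    unfolding v_def using assms(3) by (rule matrix_vector_mult_matrix_inv)
  have A_self_adjoint: "v \<bullet> (A *v u) = u \<bullet> (A *v v)"
    by (metis dot_lmul_matrix inner_commute symm transpose_matrix_vector)
  have "0 \<le> (u - v) \<bullet> (A *v (u - v))"
    using assms(2) pos_semidef_def by blast
  also have "\<dots> = u \<bullet> (A *v u) - u \<bullet> (A *v v) - v \<bullet> (A *v u) + v \<bullet> (A *v v)"
    by (simp add: matrix_vector_mult_diff_distrib inner_diff_left inner_diff_right)
  finally show ?thesis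
    using A_self_adjoint z unfolding v_def[symmetric] by (simp add: inner_commute)
qed

lemma inner_matrix_inv_add_le:
  fixes A P :: "real^'n^'n"
  assumes "transpose A = A" "pos_semidef A" "invertible A"
    and "pos_semidef P" "invertible (A + P)"
  shows "z \<bullet> (matrix_inv (A + P) *v z) \<le> z \<bullet> (matrix_inv A *v z)"
proof -
  define u where "u = matrix_inv (A + P) *v z"
  have "z = A *v u + P *v u"
    unfolding u_def using matrix_vector_mult_matrix_inv[OF assms(5)]
    by (simp add: matrix_vector_mult_add_rdistrib)
  then have "z \<bullet> u = u \<bullet> (A *v u) + u \<bullet> (P *v u)"
    by (metis inner_add_left inner_commute)
  moreover have "0 \<le> u \<bullet> (P *v u)"
    using assms(4) pos_semidef_def by blast
  moreover have "2 * (z \<bullet> u) - u \<bullet> (A *v u) \<le> z \<bullet> (matrix_inv A *v z)"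
    using inner_matrix_inv_ge[OF assms(1-3)] .
  ultimately show ?thesis
    unfolding u_def[symmetric] by linarith
qed

lemma inner_le_onorm_mult_norm_sq:
  fixes f :: "'a::real_inner \<Rightarrow> 'a"
  assumes "bounded_linear f"
  shows "z \<bullet> f z \<le> onorm f * (norm z)\<^sup>2"
proof -
  have "z \<bullet> f z \<le> norm z * norm (f z)"
    by (rule norm_cauchy_schwarz)
  also have "\<dots> \<le> norm z * (onorm f * norm z)"
    by (intro mult_left_mono onorm assms) simp
  finally show ?thesis
    by (simp add: power2_eq_square ac_simps)
qed

lemma transpose_Vmat: "transpose (Vmat \<beta> x I i) = Vmat \<beta> x I i"
  by (simp add: Vmat_def transpose_def outer_def mat_def vec_eq_iff sum_component mult.commute)

lemma pos_semidef_Vmat: "\<beta> \<ge> 0 \<Longrightarrow> pos_semidef (Vmat \<beta> x I i)"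
  unfolding Vmat_def
  by (intro pos_semidef_add pos_semidef_sum pos_semidef_outer)
     (simp add: pos_semidef_def scaleR_matrix_vector_assoc[symmetric])

lemma invertible_Vmat:
  assumes "\<beta> > 0"
  shows "invertible (Vmat \<beta> x I i)"
proof -
  have "v = 0" if "Vmat \<beta> x I i *v v = 0" for v
  proof -
    have "v \<bullet> (Vmat \<beta> x I i *v v) = v \<bullet> ((\<Sum>t\<in>expl_set I i. outer (x t)) *v v) + \<beta> * (v \<bullet> v)"
      by (simp add: Vmat_def matrix_vector_mult_add_rdistrib inner_add_right
          scaleR_matrix_vector_assoc[symmetric])
    moreover have "0 \<le> v \<bullet> ((\<Sum>t\<in>expl_set I i. outer (x t)) *v v)"
      using pos_semidef_sum[OF pos_semidef_outer] pos_semidef_def by blast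
    ultimately have "\<beta> * (v \<bullet> v) \<le> 0"
      using that by simp
    with assms show "v = 0"
      by (metis inner_eq_zero_iff inner_gt_zero_iff mult_pos_pos not_less)
  qed
  then show ?thesis
    using matrix_left_invertible_ker invertible_left_inverse by blast
qed

lemma Vmat_mono_decompose:
  assumes "j \<le> k"
  shows "Vmat \<beta> x I k = Vmat \<beta> x I j + (\<Sum>t\<in>expl_set I k - expl_set I j. outer (x t))"
proof -
  have "expl_set I j \<subseteq> expl_set I k"
    using assms by (auto simp: expl_set_def)
  moreover have "finite (expl_set I k)"
    by (simp add: expl_set_def)
  ultimately show ?thesis
    unfolding Vmat_def using sum.subset_diff[of "expl_set I j" "expl_set I k" "\<lambda>t. outer (x t)"]
    by (simp only: add_ac)
qed

lemma inner_matrix_inv_Vmat_antimono: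
  assumes "\<beta> > 0" "j \<le> k"
  shows "z \<bullet> (matrix_inv (Vmat \<beta> x I k) *v z) \<le> z \<bullet> (matrix_inv (Vmat \<beta> x I j) *v z)"
proof -
  have "invertible (Vmat \<beta> x I j + (\<Sum>t\<in>expl_set I k - expl_set I j. outer (x t)))"
    using invertible_Vmat[OF assms(1), of x I k] unfolding Vmat_mono_decompose[OF assms(2)] .
  from inner_matrix_inv_add_le[OF transpose_Vmat pos_semidef_Vmat invertible_Vmat
      pos_semidef_sum[OF pos_semidef_outer] this] assms
  show ?thesis
    by (simp add: Vmat_mono_decompose[OF assms(2), of \<beta> x I])
qed

lemma card_expl_set_le: "card (expl_set I i) \<le> i"
  using card_mono[of "{1..i}" "expl_set I i"] by (auto simp: expl_set_def)

lemma xi_le: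
  fixes z :: "real^'d"
  assumes "\<beta> > 0" "\<sigma> \<ge> 0" "S \<ge> 0" "n \<ge> 1" "(norm z)\<^sup>2 \<le> L" "a \<le> i" "i \<le> n"
  shows "xi n \<sigma> S L \<beta> x I i z \<le> sqrt (L * onorm (\<lambda>v. matrix_inv (Vmat \<beta> x I a) *v v)) *
           (\<sigma> * sqrt (real CARD('d) * ln (real n + (real n)\<^sup>2 * L / (real CARD('d) * \<beta>)))
            + sqrt (S * \<beta>))"
proof -
  define d where "d = real CARD('d)"
  define k where "k = card (expl_set I i)"
  define onorm_a where "onorm_a = onorm (\<lambda>v. matrix_inv (Vmat \<beta> x I a) *v v)"
  have "0 \<le> onorm_a"
    unfolding onorm_a_def by (intro onorm_pos_le matrix_vector_mul_bounded_linear)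
  have "z \<bullet> (matrix_inv (Vmat \<beta> x I i) *v z) \<le> z \<bullet> (matrix_inv (Vmat \<beta> x I a) *v z)"
    using assms(1,6) by (rule inner_matrix_inv_Vmat_antimono)
  also have "\<dots> \<le> onorm_a * (norm z)\<^sup>2"
    unfolding onorm_a_def by (intro inner_le_onorm_mult_norm_sq matrix_vector_mul_bounded_linear)
  also have "\<dots> \<le> L * onorm_a"
    using mult_left_mono[OF assms(5) \<open>0 \<le> onorm_a\<close>] by (simp add: mult.commute)
  finally have quad_le: "sqrt (z \<bullet> (matrix_inv (Vmat \<beta> x I i) *v z)) \<le> sqrt (L * onorm_a)"
    by (rule real_sqrt_le_mono)
  have "L \<ge> 0"
    using assms(5) by (meson order_trans zero_le_power2)
  have "k \<le> n"
    using card_expl_set_le[of I i] assms(7) unfolding k_def by linarith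
  then have "real n * real k * L / (d * \<beta>) \<le> (real n)\<^sup>2 * L / (d * \<beta>)"
    using assms(1) \<open>L \<ge> 0\<close> unfolding d_def
    by (intro divide_right_mono mult_right_mono) (simp_all add: power2_eq_square mult_left_mono)
  moreover have "0 \<le> real n * real k * L / (d * \<beta>)"
    using assms(1) \<open>L \<ge> 0\<close> unfolding d_def by simp
  ultimately have "0 \<le> ln (real n + real n * real k * L / (d * \<beta>))"
    and "ln (real n + real n * real k * L / (d * \<beta>)) \<le> ln (real n + (real n)\<^sup>2 * L / (d * \<beta>))"
    using assms(4) by simp_all
  then have "0 \<le> \<sigma> * sqrt (d * ln (real n + real n * real k * L / (d * \<beta>))) + sqrt (S * \<beta>)"
    and "\<sigma> * sqrt (d * ln (real n + real n * real k * L / (d * \<beta>))) + sqrt (S * \<beta>)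
         \<le> \<sigma> * sqrt (d * ln (real n + (real n)\<^sup>2 * L / (d * \<beta>))) + sqrt (S * \<beta>)"
    using assms(1-3) unfolding d_def by (simp_all add: mult_left_mono)
  with quad_le \<open>L \<ge> 0\<close> \<open>0 \<le> onorm_a\<close> show ?thesis
    unfolding xi_def d_def[symmetric] k_def[symmetric] onorm_a_def[symmetric]
    by (intro mult_mono) simp_all
qed

lemma continuous_on_xi: "continuous_on UNIV (xi n \<sigma> S L \<beta> x I i)"
  unfolding xi_def
  by (intro continuous_intros linear_continuous_on matrix_vector_mul_bounded_linear)

lemma borel_measurable_continuous_on_sets_borel:
  assumes "sets M = sets borel" "continuous_on UNIV f"
  shows "f \<in> borel_measurable M"
  using borel_measurable_continuous_onI[OF assms(2)] measurable_cong_sets[OF assms(1) refl] by blast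

theorem mainTheorem14:
  fixes n :: nat and ell S L \<sigma> \<beta> :: real
    and \<theta> :: "real^'d" and D :: "(real^'d) measure"
    and x :: "nat \<Rightarrow> real^'d" and \<eta> y :: "nat \<Rightarrow> real"
    and I :: "nat set" and i :: nat and \<alpha>i \<alpha>star :: real
  defines "a \<equiv> nat \<lceil>sqrt (real n * ell)\<rceil>"
  defines "g \<equiv> sqrt (L * onorm (\<lambda>v. matrix_inv (Vmat \<beta> x I a) *v v)) *
                (\<sigma> * sqrt (real CARD('d) * ln (real n + (real n)\<^sup>2 * L / (real CARD('d) * \<beta>)))
                 + sqrt (S * \<beta>))"
  assumes n_pos: "n \<ge> 1"
    and \<beta>_pos: "\<beta> > 0" and \<sigma>_nonneg: "\<sigma> \<ge> 0" and ell_nonneg: "ell \<ge> 0"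
    and theta_bound: "(norm \<theta>)\<^sup>2 \<le> S"
    and D_prob: "prob_space D" and D_sets: "sets D = sets borel"
    and D_bounded: "AE z in D. (norm z)\<^sup>2 \<le> L"
    and D_reward: "AE z in D. z \<bullet> \<theta> \<ge> 0"
    and x_bounded: "\<forall>t\<in>{1..n}. (norm (x t))\<^sup>2 \<le> L"
    and x_reward: "\<forall>t\<in>{1..n}. x t \<bullet> \<theta> \<ge> 0"
    and y_def: "\<forall>t\<in>{1..n}. y t = x t \<bullet> \<theta> + \<eta> t"
    and I_sub: "I \<subseteq> {1..n}"
    and E1: "\<forall>z. \<forall>j\<in>{a+1..n}.
               \<bar>z \<bullet> (theta_hat \<beta> x y I j - \<theta>)\<bar> \<le> xi n \<sigma> S L \<beta> x I j z"
    and i_range: "i \<in> {a+1..n}"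
    and alpha_i: "\<forall>\<alpha>. measure D {z \<in> space D. z \<bullet> theta_hat \<beta> x y I i - xi n \<sigma> S L \<beta> x I i z \<le> \<alpha>}
                        = 1 - 1 / real n \<longleftrightarrow> \<alpha> = \<alpha>i"
    and alpha_star: "\<forall>\<alpha>. measure D {z \<in> space D. z \<bullet> \<theta> \<le> \<alpha>} = 1 - 1 / real n \<longleftrightarrow> \<alpha> = \<alpha>star"
  shows "\<alpha>star - 2 * g \<le> \<alpha>i \<and> \<alpha>i \<le> \<alpha>star"
proof -
  interpret prob_space D
    by (rule D_prob)
  have "S \<ge> 0"
    using theta_bound by (meson order_trans zero_le_power2)
  have "a \<le> i" "i \<le> n"
    using i_range by auto
  define f where "f z = z \<bullet> theta_hat \<beta> x y I i - xi n \<sigma> S L \<beta> x I i z" for z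
  have f_borel: "f \<in> borel_measurable D" and reward_borel: "(\<lambda>z. z \<bullet> \<theta>) \<in> borel_measurable D"
    unfolding f_def
    by (intro borel_measurable_continuous_on_sets_borel[OF D_sets] continuous_intros continuous_on_xi)+
  have f_quantile: "\<forall>\<alpha>. measure D {z \<in> space D. f z \<le> \<alpha>} = 1 - 1 / real n \<longleftrightarrow> \<alpha> = \<alpha>i"
    using alpha_i by (simp add: f_def)
  have E1_i: "\<bar>z \<bullet> theta_hat \<beta> x y I i - z \<bullet> \<theta>\<bar> \<le> xi n \<sigma> S L \<beta> x I i z" for z
    using E1 i_range by (simp add: inner_diff_right)
  have "\<alpha>i \<le> \<alpha>star"
  proof (rule unique_quantile_le[where f = f and h = "\<lambda>z. z \<bullet> \<theta>"])
    have "f z \<le> z \<bullet> \<theta>" for z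
      using E1_i[of z] unfolding f_def by (simp add: abs_le_iff)
    then show "AE z in D. f z \<le> z \<bullet> \<theta>"
      by simp
  qed (use f_borel reward_borel alpha_star f_quantile in simp_all)
  moreover have "\<alpha>star \<le> \<alpha>i + 2 * g"
  proof (rule unique_quantile_le[where f = "\<lambda>z. z \<bullet> \<theta>" and h = "\<lambda>z. f z + 2 * g"])
    have "z \<bullet> \<theta> \<le> f z + 2 * g" if "(norm z)\<^sup>2 \<le> L" for z
    proof -
      have "xi n \<sigma> S L \<beta> x I i z \<le> g"
        unfolding g_def using \<beta>_pos \<sigma>_nonneg \<open>S \<ge> 0\<close> n_pos that \<open>a \<le> i\<close> \<open>i \<le> n\<close> by (rule xi_le)
      with E1_i[of z] show ?thesis
        unfolding f_def by (simp add: abs_le_iff)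
    qed
    with D_bounded show "AE z in D. z \<bullet> \<theta> \<le> f z + 2 * g"
      by (rule eventually_mono)
  qed (use f_borel reward_borel alpha_star f_quantile in simp_all)
  ultimately show ?thesis
    by simp
qed

end
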